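(* Let $G$ be a finite abelian group and let $\rho\ge 2$ be an integer. Then $$s_\rho(G)=\max\{|H|\cdot t_\rho(G/H): H \text{ a proper subgroup of } G\}.$$
   Context: Groups are written additively. For $A\subseteq G$ let $A_0:=A\cup\{0\}$ and $\langle A\rangle^+_\rho:=\rho A_0=\{a_1+\dots+a_\rho:a_i\in A_0\}$. $\operatorname{diam}^+_A(G):=\min\{\rho\in\mathbb{N}_0:\langle A\rangle^+_\rho=G\}$ ($\min\varnothing=\infty$); $\operatorname{diam}^+(G):=\max\{\operatorname{diam}^+_A(G):\langle A\rangle=G\}$. The period of $S\subseteq G$ is $\pi(S):=\{g\in G:S+g=S\}$; $S$ is aperiodic if $\pi(S)=\{0\}$ and periodic otherwise. A subset $A\subseteq G$ is $\rho$-maximal if it is maximal under inclusion subject to $\operatorname{diam}^+_A(G)\ge\rho$, i.e. subject to $\langle A\rangle^+_{\rho-1}\neq G$. With the convention $\max\varnothing=0$: $s_\rho(G):=\max\{|A|: A\subseteq G,\ \rho\le\operatorname{diam}^+_A(G)<\infty\}$ and $t_\rho(G):=\max\{|A|: A \text{ is an aperiodic } \rho\text{-maximal generating set for } G\}$. *)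

theory Defs
  imports "HOL-Algebra.Algebra" "HOL-Library.Extended_Nat"
begin

(* Multiplicative (HOL-Algebra) rendering of the additive notions of the paper. *)

definition zero_ext :: "('a,'b) monoid_scheme \<Rightarrow> 'a set \<Rightarrow> 'a set" where
  "zero_ext G A = A \<union> {\<one>\<^bsub>G\<^esub>}"

fun sumset_pow :: "('a,'b) monoid_scheme \<Rightarrow> 'a set \<Rightarrow> nat \<Rightarrow> 'a set" where
  "sumset_pow G A 0 = {\<one>\<^bsub>G\<^esub>}"
| "sumset_pow G A (Suc n) = set_mult G (sumset_pow G A n) (zero_ext G A)"

definition diam_plus :: "('a,'b) monoid_scheme \<Rightarrow> 'a set \<Rightarrow> enat" where
  "diam_plus G A = (if \<exists>r. sumset_pow G A r = carrier G
                     then enat (LEAST r. sumset_pow G A r = carrier G) else \<infinity>)"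

definition period :: "('a,'b) monoid_scheme \<Rightarrow> 'a set \<Rightarrow> 'a set" where
  "period G S = {g \<in> carrier G. r_coset G S g = S}"

definition aperiodic :: "('a,'b) monoid_scheme \<Rightarrow> 'a set \<Rightarrow> bool" where
  "aperiodic G S \<longleftrightarrow> period G S = {\<one>\<^bsub>G\<^esub>}"

definition rho_maximal :: "('a,'b) monoid_scheme \<Rightarrow> nat \<Rightarrow> 'a set \<Rightarrow> bool" where
  "rho_maximal G \<rho> A \<longleftrightarrow> A \<subseteq> carrier G \<and> enat \<rho> \<le> diam_plus G A \<and>
     (\<forall>B. A \<subset> B \<and> B \<subseteq> carrier G \<longrightarrow> \<not> enat \<rho> \<le> diam_plus G B)"

definition s_rho :: "('a,'b) monoid_scheme \<Rightarrow> nat \<Rightarrow> nat" where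
  "s_rho G \<rho> = Max ({card A | A. A \<subseteq> carrier G \<and> enat \<rho> \<le> diam_plus G A
                                  \<and> diam_plus G A < \<infinity>} \<union> {0})"

definition t_rho :: "('a,'b) monoid_scheme \<Rightarrow> nat \<Rightarrow> nat" where
  "t_rho G \<rho> = Max ({card A | A. aperiodic G A \<and> rho_maximal G \<rho> A
                                  \<and> A \<subseteq> carrier G \<and> generate G A = carrier G} \<union> {0})"

end

theory Submission
  imports Defs
begin

text \<open>
  Write \<open>P\<^sub>n(A) = n A\<^sub>0\<close> for the iterated sumsets (multiplicatively, products
  of \<open>n\<close> factors from \<open>A \<union> {1}\<close>).  For a subgroup \<open>H\<close> and a set \<open>B\<close> of \<open>H\<close>-cosets with
  \<open>H \<in> B\<close>, the union of \<open>P\<^sub>n(B)\<close> in \<open>G/H\<close> is \<open>P\<^sub>n(\<Union>B)\<close> in \<open>G\<close> (\<open>n \<ge> 1\<close>), so \<open>B\<close> and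
  \<open>\<Union>B\<close> have the same diameter, and \<open>|\<Union>B| = |H| |B|\<close>.

  \<open>\<ge>\<close>: a \<open>\<rho>\<close>-maximal generating set \<open>B\<close> of \<open>G/H\<close> lifts to the set \<open>\<Union>B\<close> of size
  \<open>|H| |B|\<close> and the same finite diameter \<open>\<ge> \<rho>\<close>.
  \<open>\<le>\<close>: a set \<open>A\<close> with \<open>\<rho> \<le> diam\<^sup>+(A) < \<infinity>\<close> lies in a \<open>\<rho>\<close>-maximal set \<open>C\<close>, whose
  period \<open>H\<close> is a proper subgroup (as \<open>\<rho> \<ge> 2\<close>); \<open>C\<close> is a union of \<open>H\<close>-cosets, and
  the set \<open>B\<close> of these cosets is an aperiodic \<open>\<rho>\<close>-maximal generating set of \<open>G/H\<close>
  with \<open>|A| \<le> |C| = |H| |B|\<close>.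
\<close>

subsection \<open>Iterated sumsets\<close>

lemma (in monoid) sumset_pow_carrier:
  "A \<subseteq> carrier G \<Longrightarrow> sumset_pow G A n \<subseteq> carrier G"
  by (induction n) (auto simp: set_mult_def zero_ext_def)

lemma sumset_pow_mono: "A \<subseteq> C \<Longrightarrow> sumset_pow G A n \<subseteq> sumset_pow G C n"
  by (induction n) (auto simp: set_mult_def zero_ext_def)

lemma sumset_pow_zero_ext: "sumset_pow G (zero_ext G A) n = sumset_pow G A n"
  by (induction n) (auto simp: zero_ext_def)

lemma (in monoid) one_in_sumset_pow: "A \<subseteq> carrier G \<Longrightarrow> \<one> \<in> sumset_pow G A n"
proof (induction n)
  case (Suc n)
  then have "\<one> \<otimes> \<one> \<in> sumset_pow G A (Suc n)"
    unfolding sumset_pow.simps set_mult_def zero_ext_def by blast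
  then show ?case by simp
qed simp

lemma (in monoid) sumset_pow_Suc_mono:
  assumes A: "A \<subseteq> carrier G" shows "sumset_pow G A n \<subseteq> sumset_pow G A (Suc n)"
proof
  fix x assume x: "x \<in> sumset_pow G A n"
  then have "x \<otimes> \<one> \<in> sumset_pow G A (Suc n)" by (auto simp: set_mult_def zero_ext_def)
  moreover have "x \<in> carrier G" using x sumset_pow_carrier[OF A] by blast
  then have "x \<otimes> \<one> = x" by simp
  ultimately show "x \<in> sumset_pow G A (Suc n)" by simp
qed

lemma (in monoid) sumset_pow_stabilizes:
  assumes fin: "finite (carrier G)" and A: "A \<subseteq> carrier G"
  shows "\<exists>n. sumset_pow G A (Suc n) = sumset_pow G A n"
proof (rule ccontr)
  let ?P = "sumset_pow G A"
  assume "\<nexists>n. ?P (Suc n) = ?P n"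
  then have strict: "?P n \<subset> ?P (Suc n)" for n using sumset_pow_Suc_mono[OF A] by blast
  have fin_P: "finite (?P n)" for n using sumset_pow_carrier[OF A] fin finite_subset by blast
  have "n \<le> card (?P n)" for n
  proof (induction n)
    case (Suc n)
    have "card (?P n) < card (?P (Suc n))" by (rule psubset_card_mono[OF fin_P strict])
    with Suc.IH show ?case by linarith
  qed simp
  moreover have "card (?P n) \<le> card (carrier G)" for n
    using sumset_pow_carrier[OF A] fin card_mono by blast
  ultimately have "Suc (card (carrier G)) \<le> card (carrier G)" by (meson order_trans)
  then show False by simp
qed

lemma diam_plus_cong:
  assumes "\<And>n. sumset_pow G A n = carrier G \<longleftrightarrow> sumset_pow G' B n = carrier G'"
  shows "diam_plus G A = diam_plus G' B"
  using assms unfolding diam_plus_def by simp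

lemma diam_plus_finite_iff: "diam_plus G A < \<infinity> \<longleftrightarrow> (\<exists>r. sumset_pow G A r = carrier G)"
  unfolding diam_plus_def by simp

lemma diam_plus_le:
  assumes "sumset_pow G A r = carrier G" shows "diam_plus G A \<le> enat r"
  using assms unfolding diam_plus_def by (auto intro: Least_le)

lemma (in monoid) diam_plus_finite_mono:
  assumes AC: "A \<subseteq> C" and C: "C \<subseteq> carrier G" and fin: "diam_plus G A < \<infinity>"
  shows "diam_plus G C < \<infinity>"
proof -
  obtain r where r: "sumset_pow G A r = carrier G" using fin unfolding diam_plus_finite_iff ..
  have "sumset_pow G C r = carrier G"
  proof (rule subset_antisym)
    show "sumset_pow G C r \<subseteq> carrier G" by (rule sumset_pow_carrier[OF C])
    show "carrier G \<subseteq> sumset_pow G C r" using sumset_pow_mono[OF AC, of G r] r by simp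
  qed
  then show ?thesis unfolding diam_plus_finite_iff ..
qed

lemma (in monoid) diam_plus_carrier: "diam_plus G (carrier G) \<le> enat 1"
proof -
  have "zero_ext G (carrier G) = carrier G" by (auto simp: zero_ext_def)
  then have "sumset_pow G (carrier G) 1 = {\<one>} <#> carrier G" by (simp add: One_nat_def)
  also have "\<dots> = carrier G"
  proof
    show "{\<one>} <#> carrier G \<subseteq> carrier G" by (auto simp: set_mult_def)
    show "carrier G \<subseteq> {\<one>} <#> carrier G"
    proof
      fix x assume "x \<in> carrier G"
      then have "\<one> \<otimes> x \<in> {\<one>} <#> carrier G" and "\<one> \<otimes> x = x" by (auto simp: set_mult_def)
      then show "x \<in> {\<one>} <#> carrier G" by simp
    qed
  qed
  finally show ?thesis by (rule diam_plus_le)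
qed

subsection \<open>Periods, and finite diameter versus generation\<close>

lemma (in group) period_subgroup:
  assumes C: "C \<subseteq> carrier G" shows "subgroup (period G C) G"
proof (rule subgroupI)
  show "period G C \<subseteq> carrier G" unfolding period_def by blast
  show "period G C \<noteq> {}" using C unfolding period_def by (auto intro!: exI[of _ \<one>])
  fix a b assume a: "a \<in> period G C" and b: "b \<in> period G C"
  then have ac: "a \<in> carrier G" "C #> a = C" and bc: "b \<in> carrier G" "C #> b = C"
    unfolding period_def by auto
  have "C #> inv a = (C #> a) #> inv a" using ac by simp
  also have "\<dots> = C" using C ac(1) by (simp add: coset_mult_assoc)
  finally show "inv a \<in> period G C" using ac unfolding period_def by simp
  have "C #> (a \<otimes> b) = (C #> a) #> b" using C ac(1) bc(1) by (simp add: coset_mult_assoc)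
  then show "a \<otimes> b \<in> period G C" using ac bc unfolding period_def by simp
qed

lemma (in group) period_of_right_stable:
  assumes P: "finite P" "P \<subseteq> carrier G" and a: "a \<in> carrier G" and stable: "P #> a \<subseteq> P"
  shows "a \<in> period G P"
proof -
  have "card (P #> a) = card P" using card_rcosets_equal[OF rcosetsI[OF P(2) a] P(2)] by simp
  then have "P #> a = P" using card_subset_eq[OF P(1) stable] by simp
  then show ?thesis using a unfolding period_def by simp
qed

lemma (in group) sumset_pow_subset_generate:
  assumes A: "A \<subseteq> carrier G" shows "sumset_pow G A n \<subseteq> generate G A"
proof (induction n)
  case 0 then show ?case by (simp add: generate.one)
next
  case (Suc n)
  show ?case
  proof
    fix x assume "x \<in> sumset_pow G A (Suc n)"
    then obtain y z where "y \<in> sumset_pow G A n" "z \<in> zero_ext G A" "x = y \<otimes> z"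
      by (auto simp: set_mult_def)
    then show "x \<in> generate G A" using Suc
      by (auto simp: zero_ext_def intro: generate.eng generate.incl generate.one)
  qed
qed

text \<open>In a finite group a set has finite diameter if and only if it generates the group:
  once the sumsets become stationary, the last one is stable under right translation by \<open>A\<close>,
  so its period contains \<open>\<langle>A\<rangle>\<close>.\<close>
lemma (in group) finite_diam_iff_generate:
  assumes fin: "finite (carrier G)" and A: "A \<subseteq> carrier G"
  shows "diam_plus G A < \<infinity> \<longleftrightarrow> generate G A = carrier G"
proof
  assume "diam_plus G A < \<infinity>"
  then obtain r where "sumset_pow G A r = carrier G" unfolding diam_plus_finite_iff ..
  then show "generate G A = carrier G"
    using sumset_pow_subset_generate[OF A, of r] generate_incl[OF A] by blast
next
  assume gen: "generate G A = carrier G"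
  obtain n where n: "sumset_pow G A (Suc n) = sumset_pow G A n"
    using sumset_pow_stabilizes[OF fin A] ..
  define P where "P = sumset_pow G A n"
  have Pc: "P \<subseteq> carrier G" unfolding P_def by (rule sumset_pow_carrier[OF A])
  have Pfin: "finite P" using Pc fin finite_subset by blast
  have "A \<subseteq> period G P"
  proof
    fix a assume a: "a \<in> A"
    then have "P #> a \<subseteq> P <#> zero_ext G A" by (auto simp: r_coset_def set_mult_def zero_ext_def)
    then have "P #> a \<subseteq> P" using n unfolding P_def by simp
    with a A show "a \<in> period G P" using period_of_right_stable[OF Pfin Pc] by blast
  qed
  then have per: "carrier G \<subseteq> period G P"
    using generate_subgroup_incl[OF _ period_subgroup[OF Pc]] gen by metis
  have one: "\<one> \<in> P" unfolding P_def by (rule one_in_sumset_pow[OF A])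
  have "carrier G \<subseteq> P"
  proof
    fix g assume g: "g \<in> carrier G"
    then have "P #> g = P" using per unfolding period_def by auto
    with rcosI[OF one Pc g] g show "g \<in> P" by simp
  qed
  then have "sumset_pow G A n = carrier G" using Pc unfolding P_def by blast
  then show "diam_plus G A < \<infinity>" unfolding diam_plus_finite_iff ..
qed

subsection \<open>\<open>\<rho>\<close>-maximal sets\<close>

text \<open>A \<open>\<rho>\<close>-maximal set contains \<open>\<one>\<close>, since adjoining \<open>\<one>\<close> does not change the diameter.\<close>
lemma (in monoid) one_in_rho_maximal:
  assumes "rho_maximal G \<rho> A" shows "\<one> \<in> A"
proof (rule ccontr)
  assume "\<one> \<notin> A"
  then have larger: "A \<subset> zero_ext G A" by (auto simp: zero_ext_def)
  have sub: "zero_ext G A \<subseteq> carrier G" using assms by (auto simp: zero_ext_def rho_maximal_def)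
  have "diam_plus G (zero_ext G A) = diam_plus G A"
    by (rule diam_plus_cong) (simp add: sumset_pow_zero_ext)
  then have "enat \<rho> \<le> diam_plus G (zero_ext G A)" using assms unfolding rho_maximal_def by simp
  with larger sub show False using assms unfolding rho_maximal_def by blast
qed

lemma exists_rho_maximal_superset:
  assumes fin: "finite (carrier G)" and A: "A \<subseteq> carrier G" "enat \<rho> \<le> diam_plus G A"
  shows "\<exists>C. A \<subseteq> C \<and> rho_maximal G \<rho> C"
proof -
  define Cands where "Cands = {C. A \<subseteq> C \<and> C \<subseteq> carrier G \<and> enat \<rho> \<le> diam_plus G C}"
  have "finite Cands" unfolding Cands_def using fin by (auto intro: finite_subset[of _ "Pow (carrier G)"])
  moreover have "A \<in> Cands" unfolding Cands_def using A by auto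
  ultimately obtain C where C: "C \<in> Cands" and maximal: "\<And>D. D \<in> Cands \<Longrightarrow> C \<subseteq> D \<Longrightarrow> C = D"
    using finite_has_maximal[of Cands] by blast
  have "rho_maximal G \<rho> C"
    unfolding rho_maximal_def
  proof (intro conjI allI impI)
    show "C \<subseteq> carrier G" "enat \<rho> \<le> diam_plus G C" using C unfolding Cands_def by auto
    fix D assume "C \<subset> D \<and> D \<subseteq> carrier G"
    then show "\<not> enat \<rho> \<le> diam_plus G D" using C maximal unfolding Cands_def by blast
  qed
  then show ?thesis using C unfolding Cands_def by blast
qed

text \<open>For \<open>\<rho> \<ge> 2\<close> the period of a \<open>\<rho>\<close>-maximal set is a proper subgroup: otherwise the
  set (which contains \<open>\<one>\<close>) would be the whole group, of diameter at most \<open>1\<close>.\<close>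
lemma (in group) period_rho_maximal_proper:
  assumes max: "rho_maximal G \<rho> C" and rho: "2 \<le> \<rho>"
  shows "period G C \<noteq> carrier G"
proof
  assume full: "period G C = carrier G"
  have C: "C \<subseteq> carrier G" and one: "\<one> \<in> C"
    using max one_in_rho_maximal[OF max] unfolding rho_maximal_def by auto
  have "carrier G \<subseteq> C"
  proof
    fix g assume g: "g \<in> carrier G"
    then have "C #> g = C" using full unfolding period_def by auto
    with rcosI[OF one C g] g show "g \<in> C" by simp
  qed
  then have "C = carrier G" using C by (rule subset_antisym[rotated])
  then have "enat \<rho> \<le> enat 1"
    using max diam_plus_carrier unfolding rho_maximal_def by (blast intro: order_trans)
  with rho show False by simp
qed

subsection \<open>Quotients and unions of cosets\<close>

lemma carrier_Mod_eq:
  fixes G (structure) shows "carrier (G Mod H) = rcosets H"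
  by (simp add: FactGroup_def)

lemma (in group) finite_carrier_Mod:
  "subgroup H G \<Longrightarrow> finite (carrier G) \<Longrightarrow> finite (carrier (G Mod H))"
  unfolding carrier_Mod_eq using rcosets_subset_PowG by (metis finite_Pow_iff finite_subset)

text \<open>Multiplication in the quotient is set multiplication, so taking unions commutes with it.\<close>
lemma Union_set_mult_Mod: "\<Union>(set_mult (G Mod H) S T) = set_mult G (\<Union>S) (\<Union>T)"
  by (auto simp: set_mult_def)

text \<open>Cosets are disjoint and nonempty, so a set of cosets is determined by its union.\<close>
lemma (in group) Union_rcosets_eq_iff:
  assumes H: "subgroup H G" and B: "B \<subseteq> rcosets H" "B' \<subseteq> rcosets H"
  shows "\<Union>B = \<Union>B' \<longleftrightarrow> B = B'"
proof
  have sub: "S \<subseteq> T" if S: "S \<subseteq> rcosets H" and T: "T \<subseteq> rcosets H" and U: "\<Union>S = \<Union>T" for S T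
  proof
    fix V assume V: "V \<in> S"
    then obtain v where v: "v \<in> V" using S subgroup.rcosets_non_empty[OF H] by blast
    then obtain W where W: "W \<in> T" "v \<in> W" using V U by blast
    have "V = W" using rcos_disjoint[OF H] V W v S T unfolding pairwise_def disjnt_def by blast
    with W show "V \<in> T" by simp
  qed
  assume "\<Union>B = \<Union>B'"
  then show "B = B'" using sub[OF B] sub[OF B(2,1)] by blast
qed simp

lemma (in group) card_Union_rcosets:
  assumes H: "subgroup H G" and fin: "finite (carrier G)" and B: "B \<subseteq> rcosets H"
  shows "card (\<Union>B) = card H * card B"
proof -
  have Hc: "H \<subseteq> carrier G" using H subgroup.subset by blast
  have "card (\<Union>B) = sum card B"
  proof (rule card_Union_disjoint)
    show "pairwise disjnt B" using rcos_disjoint[OF H] B pairwise_subset by blast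
    show "finite U" if "U \<in> B" for U using cosets_finite[of U H] that B Hc fin by blast
  qed
  also have "\<dots> = sum (\<lambda>_. card H) B"
    using card_rcosets_equal[OF _ Hc] B by (intro sum.cong) auto
  finally show ?thesis by simp
qed

lemma (in normal) subgroup_set_mult_commute:
  assumes S: "S \<subseteq> carrier G" shows "H <#> S = S <#> H"
proof -
  have "H <#> S = (\<Union>x\<in>S. H #> x)" by (auto simp: set_mult_def r_coset_def)
  also have "\<dots> = (\<Union>x\<in>S. x <# H)" using coset_eq S by auto
  also have "\<dots> = S <#> H" by (auto simp: set_mult_def l_coset_def)
  finally show ?thesis .
qed

lemma (in normal) subgroup_mult_Union_rcosets:
  assumes B: "B \<subseteq> rcosets H" shows "H <#> \<Union>B = \<Union>B"
proof -
  have "H <#> \<Union>B = (\<Union>V\<in>B. H <#> V)" by (auto simp: set_mult_def)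
  also have "\<dots> = \<Union>B" using rcosets_mult_eq B by auto
  finally show ?thesis .
qed

lemma (in normal) Union_sumset_pow_Mod:
  assumes B: "B \<subseteq> rcosets H" "H \<in> B"
  shows "\<Union>(sumset_pow (G Mod H) B (Suc n)) = sumset_pow G (\<Union>B) (Suc n)"
proof -
  have Uc: "\<Union>B \<subseteq> carrier G" using B rcosets_part_G[OF subgroup_axioms] by blast
  have zB: "zero_ext (G Mod H) B = B" using B by (auto simp: zero_ext_def)
  have zU: "zero_ext G (\<Union>B) = \<Union>B" using B one_closed by (auto simp: zero_ext_def)
  show ?thesis
  proof (induction n)
    case 0
    have "\<Union>(sumset_pow (G Mod H) B 1) = H <#> \<Union>B"
      by (simp add: zB Union_set_mult_Mod)
    also have "\<dots> = {\<one>} <#> \<Union>B" using subgroup_mult_Union_rcosets[OF B(1)]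
      lcos_mult_one[OF Uc] by (simp add: l_coset_eq_set_mult)
    finally show ?case by (simp add: zU)
  next
    case (Suc n)
    have "\<Union>(sumset_pow (G Mod H) B (Suc (Suc n))) = sumset_pow G (\<Union>B) (Suc n) <#> \<Union>B"
      using Suc.IH by (simp only: sumset_pow.simps(2)[of _ _ "Suc n"] zB Union_set_mult_Mod)
    then show ?case by (simp only: sumset_pow.simps(2)[of _ _ "Suc n"] zU)
  qed
qed

text \<open>Consequently \<open>B\<close> covers \<open>G/H\<close> after \<open>n\<close> steps exactly when \<open>\<Union>B\<close> covers \<open>G\<close> (for
  \<open>n = 0\<close> neither happens, as \<open>H\<close> is proper).\<close>
lemma (in normal) sumset_pow_Mod_eq_carrier_iff:
  assumes B: "B \<subseteq> rcosets H" "H \<in> B" and proper: "H \<noteq> carrier G"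
  shows "sumset_pow (G Mod H) B n = carrier (G Mod H) \<longleftrightarrow> sumset_pow G (\<Union>B) n = carrier G"
proof (cases n)
  case 0
  obtain g where g: "g \<in> carrier G" "g \<notin> H" using proper subset by blast
  then have "H #> g \<in> rcosets H" "H #> g \<noteq> H"
    using rcosetsI[OF subset g(1)] rcos_self[OF g(1) subgroup_axioms] by auto
  then have "{H} \<noteq> rcosets H" by blast
  moreover have "{\<one>} \<noteq> carrier G"
  proof
    assume "{\<one>} = carrier G"
    then have "g = \<one>" using g(1) by blast
    then show False using g(2) subgroup.one_closed[OF subgroup_axioms] by simp
  qed
  ultimately show ?thesis using 0 by (simp add: carrier_Mod_eq)
next
  case (Suc m)
  have "B \<subseteq> carrier (G Mod H)" using B(1) by (simp only: carrier_Mod_eq)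
  then have sub: "sumset_pow (G Mod H) B n \<subseteq> rcosets H"
    using monoid.sumset_pow_carrier[OF group.is_monoid[OF factorgroup_is_group]]
    unfolding carrier_Mod_eq by blast
  have "sumset_pow (G Mod H) B n = carrier (G Mod H) \<longleftrightarrow>
      \<Union>(sumset_pow (G Mod H) B n) = \<Union>(rcosets H)"
    unfolding carrier_Mod_eq by (rule Union_rcosets_eq_iff[OF subgroup_axioms sub order_refl, symmetric])
  also have "\<dots> \<longleftrightarrow> sumset_pow G (\<Union>B) n = carrier G"
    using Union_sumset_pow_Mod[OF B, of m] Suc rcosets_part_G[OF subgroup_axioms] by simp
  finally show ?thesis .
qed

lemma (in normal) diam_plus_Mod:
  assumes "B \<subseteq> rcosets H" "H \<in> B" "H \<noteq> carrier G"
  shows "diam_plus (G Mod H) B = diam_plus G (\<Union>B)"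
  by (rule diam_plus_cong) (rule sumset_pow_Mod_eq_carrier_iff[OF assms])

lemma (in normal) period_Mod:
  assumes B: "B \<subseteq> rcosets H"
  shows "period (G Mod H) B = (\<lambda>g. H #> g) ` period G (\<Union>B)"
proof -
  have Uc: "\<Union>B \<subseteq> carrier G" using B rcosets_part_G[OF subgroup_axioms] by blast
  have key: "r_coset (G Mod H) B (H #> g) = B \<longleftrightarrow> \<Union>B #> g = \<Union>B" if g: "g \<in> carrier G" for g
  proof -
    have "\<Union>(r_coset (G Mod H) B (H #> g)) = \<Union>B <#> (H #> g)"
      by (simp add: r_coset_eq_set_mult Union_set_mult_Mod)
    also have "\<dots> = (\<Union>B <#> H) #> g" using setmult_rcos_assoc[OF Uc subset g] .
    also have "\<dots> = \<Union>B #> g"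
      using subgroup_set_mult_commute[OF Uc] subgroup_mult_Union_rcosets[OF B] by simp
    finally have U: "\<Union>(r_coset (G Mod H) B (H #> g)) = \<Union>B #> g" .
    have sub: "r_coset (G Mod H) B (H #> g) \<subseteq> rcosets H"
      using monoid.r_coset_subset_G[OF group.is_monoid[OF factorgroup_is_group]] B rcosetsI[OF subset g]
      by (simp add: carrier_Mod_eq)
    show ?thesis using Union_rcosets_eq_iff[OF subgroup_axioms sub B] U by simp
  qed
  show ?thesis
    unfolding period_def carrier_Mod_eq
  proof (intro equalityI subsetI)
    fix U assume "U \<in> {U \<in> rcosets H. r_coset (G Mod H) B U = B}"
    then obtain g where "g \<in> carrier G" "U = H #> g" "r_coset (G Mod H) B U = B"
      unfolding RCOSETS_def by blast
    then show "U \<in> (\<lambda>g. H #> g) ` {g \<in> carrier G. \<Union>B #> g = \<Union>B}" using key by blast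
  next
    fix U assume "U \<in> (\<lambda>g. H #> g) ` {g \<in> carrier G. \<Union>B #> g = \<Union>B}"
    then obtain g where "g \<in> carrier G" "U = H #> g" "\<Union>B #> g = \<Union>B" by blast
    then show "U \<in> {U \<in> rcosets H. r_coset (G Mod H) B U = B}"
      using key rcosetsI[OF subset] by blast
  qed
qed

lemma (in normal) Union_rcosets_of_periodic:
  assumes C: "C \<subseteq> carrier G" and per: "H \<subseteq> period G C"
  shows "\<Union>((\<lambda>a. H #> a) ` C) = C"
proof
  show "C \<subseteq> \<Union>((\<lambda>a. H #> a) ` C)" using rcos_self[OF _ subgroup_axioms] C by blast
  show "\<Union>((\<lambda>a. H #> a) ` C) \<subseteq> C"
  proof clarify
    fix a x assume a: "a \<in> C" and x: "x \<in> H #> a"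
    then have "x \<in> a <# H" using coset_eq C by blast
    then obtain h where h: "h \<in> H" "x = a \<otimes> h" unfolding l_coset_def by blast
    then have "C #> h = C" using per unfolding period_def by blast
    then show "x \<in> C" using a h unfolding r_coset_def by blast
  qed
qed

text \<open>\<open>\<rho>\<close>-maximality descends from the union \<open>\<Union>B\<close> to the set of cosets \<open>B\<close>, since a
  strictly larger set of cosets has a strictly larger union.\<close>
lemma (in normal) rho_maximal_Mod:
  assumes B: "B \<subseteq> rcosets H" "H \<in> B" and proper: "H \<noteq> carrier G"
    and max: "rho_maximal G \<rho> (\<Union>B)"
  shows "rho_maximal (G Mod H) \<rho> B"
  unfolding rho_maximal_def
proof (intro conjI allI impI)
  show "B \<subseteq> carrier (G Mod H)" using B by (simp add: carrier_Mod_eq)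
  show "enat \<rho> \<le> diam_plus (G Mod H) B"
    using max diam_plus_Mod[OF B proper] unfolding rho_maximal_def by simp
  fix B' assume B': "B \<subset> B' \<and> B' \<subseteq> carrier (G Mod H)"
  then have B'r: "B' \<subseteq> rcosets H" and HB': "H \<in> B'" using B by (auto simp: carrier_Mod_eq)
  have "\<Union>B \<subset> \<Union>B'" using Union_rcosets_eq_iff[OF subgroup_axioms B(1) B'r] B' by blast
  moreover have "\<Union>B' \<subseteq> carrier G" using B'r rcosets_part_G[OF subgroup_axioms] by blast
  ultimately have "\<not> enat \<rho> \<le> diam_plus G (\<Union>B')" using max unfolding rho_maximal_def by blast
  then show "\<not> enat \<rho> \<le> diam_plus (G Mod H) B'" using diam_plus_Mod[OF B'r HB' proper] by simp
qed

lemma (in normal) lift_rho_maximal_generating: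
  assumes fin: "finite (carrier G)" and proper: "H \<noteq> carrier G"
    and max: "rho_maximal (G Mod H) \<rho> B" and gen: "generate (G Mod H) B = carrier (G Mod H)"
  shows "\<Union>B \<subseteq> carrier G \<and> enat \<rho> \<le> diam_plus G (\<Union>B) \<and> diam_plus G (\<Union>B) < \<infinity>
    \<and> card (\<Union>B) = card H * card B"
proof -
  interpret Q: group "G Mod H" by (rule factorgroup_is_group)
  have Bc: "B \<subseteq> carrier (G Mod H)" using max unfolding rho_maximal_def by blast
  then have B: "B \<subseteq> rcosets H" by (simp only: carrier_Mod_eq)
  have HB: "H \<in> B" using Q.one_in_rho_maximal[OF max] by simp
  have diam: "diam_plus (G Mod H) B = diam_plus G (\<Union>B)" by (rule diam_plus_Mod[OF B HB proper])
  have "diam_plus (G Mod H) B < \<infinity>"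
    using Q.finite_diam_iff_generate[OF finite_carrier_Mod[OF subgroup_axioms fin] Bc] gen by simp
  moreover have "enat \<rho> \<le> diam_plus (G Mod H) B" using max unfolding rho_maximal_def by blast
  moreover have "\<Union>B \<subseteq> carrier G" using B rcosets_part_G[OF subgroup_axioms] by blast
  ultimately show ?thesis using diam card_Union_rcosets[OF subgroup_axioms fin B] by simp
qed

lemma (in comm_group) descend_to_quotient:
  assumes fin: "finite (carrier G)" and rho: "2 \<le> \<rho>"
    and A: "A \<subseteq> carrier G" "enat \<rho> \<le> diam_plus G A" "diam_plus G A < \<infinity>"
  shows "\<exists>H B. subgroup H G \<and> H \<noteq> carrier G \<and> aperiodic (G Mod H) B \<and> rho_maximal (G Mod H) \<rho> B
    \<and> B \<subseteq> carrier (G Mod H) \<and> generate (G Mod H) B = carrier (G Mod H) \<and> card A \<le> card H * card B"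
proof -
  obtain C where AC: "A \<subseteq> C" and max: "rho_maximal G \<rho> C"
    using exists_rho_maximal_superset[OF fin A(1,2)] by blast
  have C: "C \<subseteq> carrier G" and one: "\<one> \<in> C"
    using max one_in_rho_maximal[OF max] unfolding rho_maximal_def by auto
  define H where "H = period G C"
  have H: "subgroup H G" unfolding H_def by (rule period_subgroup[OF C])
  have proper: "H \<noteq> carrier G" unfolding H_def by (rule period_rho_maximal_proper[OF max rho])
  interpret N: normal H G by (rule subgroup_imp_normal[OF H])
  define B where "B = (\<lambda>a. H #> a) ` C"
  have B: "B \<subseteq> rcosets H" unfolding B_def using C rcosetsI[OF N.subset] by blast
  have HB: "H \<in> B" unfolding B_def using one coset_mult_one[OF N.subset] by force
  have UB: "\<Union>B = C" unfolding B_def by (rule N.Union_rcosets_of_periodic[OF C]) (simp add: H_def)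
  have Bc: "B \<subseteq> carrier (G Mod H)" using B by (simp only: carrier_Mod_eq)
  have Bmax: "rho_maximal (G Mod H) \<rho> B" using N.rho_maximal_Mod[OF B HB proper] max UB by simp
  have "period (G Mod H) B = (\<lambda>g. H #> g) ` H" using N.period_Mod[OF B] UB H_def by simp
  also have "\<dots> = {H}" using coset_join2[OF _ H] H N.subset subgroup.one_closed[OF H] by blast
  finally have aper: "aperiodic (G Mod H) B" unfolding aperiodic_def by simp
  have "diam_plus (G Mod H) B < \<infinity>"
    using N.diam_plus_Mod[OF B HB proper] UB diam_plus_finite_mono[OF AC C A(3)] by simp
  then have gen: "generate (G Mod H) B = carrier (G Mod H)"
    using group.finite_diam_iff_generate[OF N.factorgroup_is_group finite_carrier_Mod[OF H fin] Bc]
    by simp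
  have "card A \<le> card H * card B"
    using card_mono[OF finite_subset[OF C fin] AC] card_Union_rcosets[OF H fin B] UB by simp
  with H proper aper Bmax Bc gen show ?thesis by blast
qed

lemma finite_card_witnesses:
  "finite (carrier M) \<Longrightarrow> finite {card A | A. A \<subseteq> carrier M \<and> P A}"
  by (rule finite_subset[of _ "{..card (carrier M)}"]) (auto intro: card_mono)

lemma finite_t_rho_witnesses:
  assumes "finite (carrier M)"
  shows "finite {card A | A. aperiodic M A \<and> rho_maximal M \<rho> A \<and> A \<subseteq> carrier M
    \<and> generate M A = carrier M}"
  using finite_card_witnesses[OF assms, of "\<lambda>A. aperiodic M A \<and> rho_maximal M \<rho> A
    \<and> generate M A = carrier M"] by (simp add: conj_ac)

lemma t_rho_upper:
  assumes "finite (carrier M)" and "aperiodic M B" "rho_maximal M \<rho> B" "B \<subseteq> carrier M"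
    "generate M B = carrier M"
  shows "card B \<le> t_rho M \<rho>"
proof -
  let ?T = "{card A | A. aperiodic M A \<and> rho_maximal M \<rho> A \<and> A \<subseteq> carrier M
    \<and> generate M A = carrier M}"
  have "finite ?T" by (rule finite_t_rho_witnesses[OF assms(1)])
  moreover have "card B \<in> ?T" using assms(2-5) by blast
  ultimately show ?thesis unfolding t_rho_def by (intro Max_ge) auto
qed

lemma finite_subgroup_terms:
  assumes "finite (carrier G)" shows "finite {f H | H. subgroup H G \<and> H \<noteq> carrier G}"
proof (rule finite_subset)
  show "{f H | H. subgroup H G \<and> H \<noteq> carrier G} \<subseteq> f ` Pow (carrier G)"
    using subgroup.subset by blast
qed (use assms in simp)

lemma t_rho_attained:
  assumes "finite (carrier M)" and "t_rho M \<rho> \<noteq> 0"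
  shows "\<exists>B. aperiodic M B \<and> rho_maximal M \<rho> B \<and> B \<subseteq> carrier M
    \<and> generate M B = carrier M \<and> card B = t_rho M \<rho>"
proof -
  let ?T = "{card A | A. aperiodic M A \<and> rho_maximal M \<rho> A \<and> A \<subseteq> carrier M
    \<and> generate M A = carrier M}"
  have "finite ?T" by (rule finite_t_rho_witnesses[OF assms(1)])
  then have "t_rho M \<rho> \<in> ?T \<union> {0}" unfolding t_rho_def by (intro Max_in) simp_all
  then have "t_rho M \<rho> \<in> ?T" using assms(2) by blast
  then obtain B where "t_rho M \<rho> = card B" "aperiodic M B" "rho_maximal M \<rho> B"
    "B \<subseteq> carrier M" "generate M B = carrier M" by blast
  then show ?thesis by (intro exI[of _ B]) simp
qed

lemma Max_insert_zero_eq: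
  fixes S R :: "nat set"
  assumes "finite S" "finite R" and "\<forall>a\<in>S. \<exists>b\<in>R. a \<le> b" and "\<forall>b\<in>R. b = 0 \<or> b \<in> S"
  shows "Max (S \<union> {0}) = Max (R \<union> {0})"
proof -
  have bound: "Max (U \<union> {0}) \<le> Max (V \<union> {0})"
    if fin: "finite V" and dom: "\<forall>a\<in>U. a = 0 \<or> (\<exists>b\<in>V. a \<le> b)" and "finite U"
    for U V :: "nat set"
  proof (rule Max.boundedI)
    show "finite (U \<union> {0})" "U \<union> {0} \<noteq> {}" using \<open>finite U\<close> by auto
    fix a assume a: "a \<in> U \<union> {0}"
    show "a \<le> Max (V \<union> {0})"
    proof (cases "a = 0")
      case False
      then obtain b where b: "b \<in> V" "a \<le> b" using a dom by auto
      have "b \<le> Max (V \<union> {0})" using b(1) fin by (intro Max_ge) auto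
      with b(2) show ?thesis by (rule le_trans)
    qed simp
  qed
  have domS: "\<forall>a\<in>S. a = 0 \<or> (\<exists>b\<in>R. a \<le> b)" using assms(3) by blast
  have domR: "\<forall>b\<in>R. b = 0 \<or> (\<exists>a\<in>S. b \<le> a)" using assms(4) by blast
  show ?thesis using bound[OF assms(2) domS assms(1)] bound[OF assms(1) domR assms(2)]
    by (rule antisym)
qed

context comm_group
begin

lemma s_rho_witness_bounded:
  assumes fin: "finite (carrier G)" and rho: "2 \<le> \<rho>"
    and A: "A \<subseteq> carrier G" "enat \<rho> \<le> diam_plus G A" "diam_plus G A < \<infinity>"
  shows "\<exists>H. subgroup H G \<and> H \<noteq> carrier G \<and> card A \<le> card H * t_rho (G Mod H) \<rho>"
proof -
  obtain H B where H: "subgroup H G" "H \<noteq> carrier G" and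
    B: "aperiodic (G Mod H) B" "rho_maximal (G Mod H) \<rho> B" "B \<subseteq> carrier (G Mod H)"
      "generate (G Mod H) B = carrier (G Mod H)" and card: "card A \<le> card H * card B"
    using descend_to_quotient[OF fin rho A] by blast
  have "card B \<le> t_rho (G Mod H) \<rho>" by (rule t_rho_upper[OF finite_carrier_Mod[OF H(1) fin] B])
  then have "card H * card B \<le> card H * t_rho (G Mod H) \<rho>" by (rule mult_le_mono2)
  with card have "card A \<le> card H * t_rho (G Mod H) \<rho>" by (rule le_trans)
  with H show ?thesis by blast
qed

lemma t_rho_term_realized:
  assumes fin: "finite (carrier G)" and H: "subgroup H G" "H \<noteq> carrier G"
    and nonzero: "card H * t_rho (G Mod H) \<rho> \<noteq> 0"
  shows "card H * t_rho (G Mod H) \<rho> \<in>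
    {card A | A. A \<subseteq> carrier G \<and> enat \<rho> \<le> diam_plus G A \<and> diam_plus G A < \<infinity>}"
proof -
  interpret N: normal H G by (rule subgroup_imp_normal[OF H(1)])
  obtain B where B: "rho_maximal (G Mod H) \<rho> B" "generate (G Mod H) B = carrier (G Mod H)"
    "card B = t_rho (G Mod H) \<rho>"
    using t_rho_attained[OF finite_carrier_Mod[OF H(1) fin], of \<rho>] nonzero by auto
  have lift: "\<Union>B \<subseteq> carrier G" "enat \<rho> \<le> diam_plus G (\<Union>B)" "diam_plus G (\<Union>B) < \<infinity>"
    "card (\<Union>B) = card H * t_rho (G Mod H) \<rho>"
    using N.lift_rho_maximal_generating[OF fin H(2) B(1,2)] B(3) by simp_all
  show ?thesis unfolding lift(4)[symmetric] using lift(1-3) by blast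
qed

end

theorem lemma2p3:
  fixes G :: "('a, 'b) monoid_scheme" and \<rho> :: nat
  assumes "comm_group G" and "finite (carrier G)" and "2 \<le> \<rho>"
  shows "s_rho G \<rho> =
    Max ({card H * t_rho (G Mod H) \<rho> | H. subgroup H G \<and> H \<noteq> carrier G} \<union> {0})"
proof -
  interpret comm_group G by (rule assms(1))
  let ?S = "{card A | A. A \<subseteq> carrier G \<and> enat \<rho> \<le> diam_plus G A \<and> diam_plus G A < \<infinity>}"
  let ?R = "{card H * t_rho (G Mod H) \<rho> | H. subgroup H G \<and> H \<noteq> carrier G}"
  have "finite ?S" by (rule finite_card_witnesses[OF assms(2)])
  moreover have "finite ?R" by (rule finite_subgroup_terms[OF assms(2)])
  moreover have "\<forall>a\<in>?S. \<exists>b\<in>?R. a \<le> b" using s_rho_witness_bounded[OF assms(2,3)] by blast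
  moreover have "\<forall>b\<in>?R. b = 0 \<or> b \<in> ?S" using t_rho_term_realized[OF assms(2)] by blast
  ultimately show ?thesis unfolding s_rho_def by (rule Max_insert_zero_eq)
qed

end
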